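(* Let $M\subseteq B(H)$ be a finite-dimensional von Neumann algebra, $N=B(K)$, and let $V\subseteq B(H)\otimes B(K)$ be a decomposable quantum multi-relation on $(M,N)$ with components $V_1\subseteq B(\overline K,H)$ and $V_2\subseteq B(H,\overline K)$. Then: (1) $\sigma'(\mathcal{P}_{V_1}\otimes\mathcal{P}_{V_2})=\mathcal{P}_V$, where $\sigma':M\otimes N\otimes N^{op}\otimes M^{op}\to M\otimes M^{op}\otimes N\otimes N^{op}$ is the isomorphism $P\otimes Q\otimes P'\otimes Q'\mapsto P\otimes Q'\otimes Q\otimes P'$; (2) if $M$ is minimally represented on $H$, then $\mathcal{A}_{\mathcal{S}_V}=\mathcal{A}_{\mathcal{P}_{V_2}}\circ\mathcal{A}_{\mathcal{P}_{V_1}}$.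
   Context: All Hilbert spaces are finite dimensional; inner products linear in the second variable; $\theta_{\xi,\eta}(\eta')=\langle\eta,\eta'\rangle\xi$. $\overline K$ is the conjugate Hilbert space and $\pi_{op}:N^{op}\to B(\overline K)$, $\pi_{op}(T)\overline\xi=\overline{T^*\xi}$. A quantum multi-relation on $(M,N)$ is a subspace $V\subseteq B(H)\otimes N$ which is an $(M'\otimes1)$–$(M'\otimes1)$ bimodule with $(1\otimes Z(N))V\subseteq V$. Let $\sigma:B(\overline K,H)\otimes B(H,\overline K)\to B(H)\otimes B(K)$ be the linear isomorphism $\sigma(\theta_{\xi_1,\overline{\eta_1}}\otimes\theta_{\overline{\eta_2},\xi_2})=\theta_{\xi_1,\xi_2}\otimes\theta_{\eta_1,\eta_2}$ ($\xi_i\in H,\eta_i\in K$). $V$ is decomposable if there are subspaces $V_1\subseteq B(\overline K,H)$, $V_2\subseteq B(H,\overline K)$ (its components) with $\sigma(V_1\otimes V_2)=V$. Weaver actions (all operator spaces with Hilbert–Schmidt inner products): $\pi_1$ of $M\otimes N$ on $B(\overline K,H)$, $\pi_1(T_1\otimes T_2)S=T_1S\,\pi_{op}(T_2)$; $\pi_2$ of $N^{op}\otimes M^{op}$ on $B(H,\overline K)$, $\pi_2(T_1\otimes T_2)S=\pi_{op}(T_1)ST_2$; $\pi$ of $M\otimes M^{op}\otimes N\otimes N^{op}$ on $B(H)\otimes B(K)$, $\pi(T_1\otimes T_2\otimes T_3\otimes T_4)(S_1\otimes S_2)=T_1S_1T_2\otimes T_3S_2T_4$. $\mathcal{P}_{V_1}\in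 M\otimes N$, $\mathcal{P}_{V_2}\in N^{op}\otimes M^{op}$, $\mathcal{P}_V\in M\otimes M^{op}\otimes N\otimes N^{op}$ are the projections whose Weaver actions are the orthogonal projections onto $V_1,V_2,V$ respectively. $M$ minimally represented means $M'=Z(M)$. Writing $\mathcal{P}_{V_1}=\sum_iP_i\otimes Q_i$ and $\mathcal{P}_{V_2}=\sum_jP'_j\otimes Q'_j$: $\mathcal{A}_{\mathcal{P}_{V_1}}:M\to N$, $m\mapsto\sum_i\mathrm{tr}_H(P_im)Q_i$, and $\mathcal{A}_{\mathcal{P}_{V_2}}:N\to M$, $n\mapsto\sum_j\mathrm{tr}_K(nP'_j)Q'_j$. $\mathcal{S}_V=(\mathrm{id}\otimes\mathrm{id}\otimes\mathrm{tr}_K)(\mathrm{id}\otimes\mathrm{id}\otimes m_N)(\mathcal{P}_V)\in M\otimes M^{op}$ with $m_N(a\otimes b)=ab$, and $\mathcal{A}_{\mathcal{S}_V}(m)=(\mathrm{tr}_H\otimes\mathrm{id})(\mathcal{S}_V(m\otimes1))$. *)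

theory Defs
  imports Complex_Main
begin

text \<open>Hilbert spaces are H = C^'h and K = C^'k for finite
  index types 'h, 'k (orthonormal bases).  An operator from C^'j to C^'i is its matrix,
  a function  'i => 'j => complex.  Tensor products of operator spaces are realised by
  Kronecker products, B(H1) (x) B(H2) = B(H1 (x) H2) with index pairs.  The conjugate
  space of K is identified with C^'k via  conj(eta) <-> coordinates of eta-bar  in the
  basis e_j-bar, so B(Kbar,H) = ('h,'k) op, B(H,Kbar) = ('k,'h) op and
  pi_op(T) is the transpose of T.  Opposite algebras have the same underlying
  vector space (only the product differs).\<close>

type_synonym ('i,'j) op = "'i \<Rightarrow> 'j \<Rightarrow> complex"

definition mmul :: "('i,'k::finite) op \<Rightarrow> ('k,'j) op \<Rightarrow> ('i,'j) op" where
  "mmul A B = (\<lambda>i j. \<Sum>k\<in>UNIV. A i k * B k j)"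

definition adj :: "('i,'j) op \<Rightarrow> ('j,'i) op" where
  "adj A = (\<lambda>i j. cnj (A j i))"

definition idop :: "('i,'i) op" where
  "idop = (\<lambda>i j. if i = j then 1 else 0)"

definition kron :: "('a,'b) op \<Rightarrow> ('c,'d) op \<Rightarrow> ('a \<times> 'c, 'b \<times> 'd) op" where
  "kron A B = (\<lambda>(i,k) (j,l). A i j * B k l)"

definition hs_inner :: "('i::finite,'j::finite) op \<Rightarrow> ('i,'j) op \<Rightarrow> complex" where
  "hs_inner S T = (\<Sum>i\<in>UNIV. \<Sum>j\<in>UNIV. cnj (S i j) * T i j)"

definition op_span :: "('i,'j) op set \<Rightarrow> ('i,'j) op set" where
  "op_span S = {T. \<exists>F c. finite F \<and> F \<subseteq> S \<and> T = (\<lambda>i j. \<Sum>s\<in>F. c s * s i j)}"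

definition op_subspace :: "('i,'j) op set \<Rightarrow> bool" where
  "op_subspace V \<longleftrightarrow> (\<lambda>i j. 0) \<in> V \<and> (\<forall>x\<in>V. \<forall>y\<in>V. (\<lambda>i j. x i j + y i j) \<in> V)
     \<and> (\<forall>c. \<forall>x\<in>V. (\<lambda>i j. c * x i j) \<in> V)"

definition is_orth_proj :: "('i::finite,'j::finite) op set \<Rightarrow> (('i,'j) op \<Rightarrow> ('i,'j) op) \<Rightarrow> bool" where
  "is_orth_proj V P \<longleftrightarrow> (\<forall>S. P S \<in> V \<and> (\<forall>T\<in>V. hs_inner T (\<lambda>i j. S i j - P S i j) = 0))"

definition commutant :: "('i::finite,'i) op set \<Rightarrow> ('i,'i) op set" where
  "commutant S = {T. \<forall>A\<in>S. mmul T A = mmul A T}"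

definition center :: "('i::finite,'i) op set \<Rightarrow> ('i,'i) op set" where
  "center S = S \<inter> commutant S"

definition is_fd_vN_algebra :: "('i::finite,'i) op set \<Rightarrow> bool" where
  "is_fd_vN_algebra M \<longleftrightarrow> op_subspace M \<and> idop \<in> M \<and> (\<forall>A\<in>M. \<forall>B\<in>M. mmul A B \<in> M)
     \<and> (\<forall>A\<in>M. adj A \<in> M)"

definition minimally_represented :: "('i::finite,'i) op set \<Rightarrow> bool" where
  "minimally_represented M \<longleftrightarrow> commutant M = center M"

definition alg_tensor :: "('a,'a) op set \<Rightarrow> ('b,'b) op set \<Rightarrow> ('a \<times> 'b, 'a \<times> 'b) op set" where
  "alg_tensor A B = op_span {kron a b | a b. a \<in> A \<and> b \<in> B}"

definition quantum_multi_relation ::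
  "('h::finite,'h) op set \<Rightarrow> ('k::finite,'k) op set \<Rightarrow> ('h \<times> 'k, 'h \<times> 'k) op set \<Rightarrow> bool" where
  "quantum_multi_relation M N V \<longleftrightarrow> op_subspace V \<and> V \<subseteq> alg_tensor UNIV N
     \<and> (\<forall>A\<in>commutant M. \<forall>X\<in>V. mmul (kron A idop) X \<in> V \<and> mmul X (kron A idop) \<in> V)
     \<and> (\<forall>Z\<in>center N. \<forall>X\<in>V. mmul (kron idop Z) X \<in> V)"

text \<open>sigma on elementary tensors: sigma(A (x) B) for A in B(Kbar,H), B in B(H,Kbar).
  (sigma(theta_{xi1,eta1bar} (x) theta_{eta2bar,xi2}) = theta_{xi1,xi2} (x) theta_{eta1,eta2}.)\<close>
definition sigma_el :: "('h,'k) op \<Rightarrow> ('k,'h) op \<Rightarrow> ('h \<times> 'k, 'h \<times> 'k) op" where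
  "sigma_el A B = (\<lambda>(a,b) (a',b'). A a b * B b' a')"

definition decomposable_with ::
  "('h \<times> 'k, 'h \<times> 'k) op set \<Rightarrow> ('h,'k) op set \<Rightarrow> ('k,'h) op set \<Rightarrow> bool" where
  "decomposable_with V V1 V2 \<longleftrightarrow> op_subspace V1 \<and> op_subspace V2
     \<and> V = op_span {sigma_el A B | A B. A \<in> V1 \<and> B \<in> V2}"

definition pi_op :: "('k,'k) op \<Rightarrow> ('k,'k) op" where
  "pi_op T = (\<lambda>i j. T j i)"

text \<open>Weaver actions (linear extensions of the formulas on elementary tensors):
  pi1 (T1 (x) T2) S = T1 S pi_op(T2),  pi2 (T1 (x) T2) S = pi_op(T1) S T2,
  pi (T1 (x) T2 (x) T3 (x) T4) (S1 (x) S2) = T1 S1 T2 (x) T3 S2 T4.\<close>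
definition pi1 :: "('h \<times> 'k, 'h \<times> 'k) op \<Rightarrow> ('h::finite,'k::finite) op \<Rightarrow> ('h,'k) op" where
  "pi1 P S = (\<lambda>a c. \<Sum>x\<in>UNIV. \<Sum>y\<in>UNIV. P (a,c) (x,y) * S x y)"

definition pi2 :: "('k \<times> 'h, 'k \<times> 'h) op \<Rightarrow> ('k::finite,'h::finite) op \<Rightarrow> ('k,'h) op" where
  "pi2 Q S = (\<lambda>c d. \<Sum>x\<in>UNIV. \<Sum>y\<in>UNIV. Q (x,y) (c,d) * S x y)"

definition pi4 :: "('h \<times> 'h \<times> 'k \<times> 'k, 'h \<times> 'h \<times> 'k \<times> 'k) op
    \<Rightarrow> ('h::finite \<times> 'k::finite, 'h \<times> 'k) op \<Rightarrow> ('h \<times> 'k, 'h \<times> 'k) op" where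
  "pi4 T S = (\<lambda>(a,b) (d,c). \<Sum>x\<in>UNIV. \<Sum>y\<in>UNIV. \<Sum>u\<in>UNIV. \<Sum>v\<in>UNIV.
      T (a,y,b,v) (x,d,u,c) * S (x,u) (y,v))"

text \<open>sigma' : M (x) N (x) N^op (x) M^op -> M (x) M^op (x) N (x) N^op,
  P (x) Q (x) P' (x) Q' |-> P (x) Q' (x) Q (x) P'.\<close>
definition sigma' :: "(('h \<times> 'k) \<times> ('k \<times> 'h), ('h \<times> 'k) \<times> ('k \<times> 'h)) op
    \<Rightarrow> ('h \<times> 'h \<times> 'k \<times> 'k, 'h \<times> 'h \<times> 'k \<times> 'k) op" where
  "sigma' X = (\<lambda>(a1,a2,a3,a4) (b1,b2,b3,b4). X ((a1,a3),(a4,a2)) ((b1,b3),(b4,b2)))"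

definition ptrace1 :: "('a::finite \<times> 'b, 'a \<times> 'b) op \<Rightarrow> ('b,'b) op" where
  "ptrace1 X = (\<lambda>b b'. \<Sum>a\<in>UNIV. X (a,b) (a,b'))"

text \<open>A_P(m) = sum_i tr_H(P_i m) Q_i = (tr_H (x) id)(P (m (x) 1)) for P = sum_i P_i (x) Q_i.\<close>
definition A_P1 :: "('h::finite \<times> 'k::finite, 'h \<times> 'k) op \<Rightarrow> ('h,'h) op \<Rightarrow> ('k,'k) op" where
  "A_P1 P m = ptrace1 (mmul P (kron m idop))"

text \<open>A_P'(n) = sum_j tr_K(n P'_j) Q'_j = (tr_K (x) id)((n (x) 1) P') for P' = sum_j P'_j (x) Q'_j.\<close>
definition A_P2 :: "('k::finite \<times> 'h::finite, 'k \<times> 'h) op \<Rightarrow> ('k,'k) op \<Rightarrow> ('h,'h) op" where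
  "A_P2 P n = ptrace1 (mmul (kron n idop) P)"

definition id_id_mN :: "('h \<times> 'h \<times> 'k::finite \<times> 'k, 'h \<times> 'h \<times> 'k \<times> 'k) op
    \<Rightarrow> ('h \<times> 'h \<times> 'k, 'h \<times> 'h \<times> 'k) op" where
  "id_id_mN P = (\<lambda>(a1,a2,a3) (b1,b2,b3). \<Sum>z\<in>(UNIV::'k set). P (a1,a2,a3,z) (b1,b2,z,b3))"

definition id_id_trK :: "('h \<times> 'h \<times> 'k::finite, 'h \<times> 'h \<times> 'k) op \<Rightarrow> ('h \<times> 'h, 'h \<times> 'h) op" where
  "id_id_trK R = (\<lambda>(a1,a2) (b1,b2). \<Sum>c\<in>(UNIV::'k set). R (a1,a2,c) (b1,b2,c))"

definition S_V :: "('h \<times> 'h \<times> 'k::finite \<times> 'k, 'h \<times> 'h \<times> 'k \<times> 'k) op \<Rightarrow> ('h \<times> 'h, 'h \<times> 'h) op" where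
  "S_V P = id_id_trK (id_id_mN P)"

definition A_S :: "('h::finite \<times> 'h, 'h \<times> 'h) op \<Rightarrow> ('h,'h) op \<Rightarrow> ('h,'h) op" where
  "A_S S m = ptrace1 (mmul S (kron m idop))"

end

theory Submission
  imports Defs
begin

text \<open>Conjugating by \<open>\<sigma>\<close>, the Weaver action of \<open>\<sigma>'(P\<^sub>1 \<otimes> P\<^sub>2)\<close> becomes the tensor
  product of the Weaver actions of \<open>P\<^sub>1\<close> and \<open>P\<^sub>2\<close>.  The tensor product of the orthogonal
  projections onto \<open>V\<^sub>1\<close> and \<open>V\<^sub>2\<close> is the orthogonal projection onto \<open>V\<^sub>1 \<otimes> V\<^sub>2\<close>, so this
  action is the orthogonal projection onto \<open>V = \<sigma>(V\<^sub>1 \<otimes> V\<^sub>2)\<close>; orthogonal projections are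
  unique and the Weaver action is faithful, whence \<open>\<sigma>'(P\<^sub>1 \<otimes> P\<^sub>2) = P\<^sub>V\<close>.  Part (2) is then
  a rearrangement of finite sums, valid for every \<open>m\<close>.  Neither part uses the algebraic
  hypotheses on \<open>M\<close>, \<open>V\<close>, or on the tensor factors of the projections.\<close>

lemma sum_UNIV_prod:
  "(\<Sum>p\<in>(UNIV::('a::finite \<times> 'b::finite) set). f p) = (\<Sum>x\<in>UNIV. \<Sum>y\<in>UNIV. f (x,y))"
  using sum.cartesian_product[of "\<lambda>x y. f (x,y)" UNIV UNIV] by (simp add: case_prod_beta')

lemma sum_swap_nested:
  "(\<Sum>a\<in>(UNIV::'a::finite set). \<Sum>b\<in>(UNIV::'b::finite set). \<Sum>c\<in>(UNIV::'c::finite set).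
      \<Sum>d\<in>(UNIV::'d::finite set). f a b c d)
    = (\<Sum>c\<in>UNIV. \<Sum>d\<in>UNIV. \<Sum>a\<in>UNIV. \<Sum>b\<in>UNIV. f a b c d)"
proof -
  have "(\<Sum>a\<in>(UNIV::'a set). \<Sum>b\<in>(UNIV::'b set). \<Sum>c\<in>(UNIV::'c set). \<Sum>d\<in>(UNIV::'d set). f a b c d)
      = (\<Sum>t\<in>UNIV. \<Sum>s\<in>UNIV. f (fst t) (snd t) (fst s) (snd s))"
    by (simp add: sum_UNIV_prod)
  also have "\<dots> = (\<Sum>s\<in>UNIV. \<Sum>t\<in>UNIV. f (fst t) (snd t) (fst s) (snd s))"
    by (rule sum.swap)
  also have "\<dots> = (\<Sum>c\<in>UNIV. \<Sum>d\<in>UNIV. \<Sum>a\<in>UNIV. \<Sum>b\<in>UNIV. f a b c d)"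
    by (simp add: sum_UNIV_prod)
  finally show ?thesis .
qed

lemma sum_if_constant_condition: "(\<Sum>j\<in>A. if P then f j else 0) = (if P then sum f A else 0)"
  by simp

lemma hs_inner_diff_right: "hs_inner X (\<lambda>i j. Y i j - Z i j) = hs_inner X Y - hs_inner X Z"
  by (simp add: hs_inner_def right_diff_distrib sum_subtractf)

lemma hs_inner_diff_left: "hs_inner (\<lambda>i j. Y i j - Z i j) X = hs_inner Y X - hs_inner Z X"
  by (simp add: hs_inner_def left_diff_distrib sum_subtractf)

lemma hs_inner_self_eq_0_iff: "hs_inner X X = 0 \<longleftrightarrow> X = (\<lambda>i j. 0)"
proof
  have "cnj z * z = complex_of_real ((cmod z)\<^sup>2)" for z
    by (metis complex_norm_square mult.commute)
  then have "hs_inner X X = complex_of_real (\<Sum>i\<in>UNIV. \<Sum>j\<in>UNIV. (cmod (X i j))\<^sup>2)"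
    by (simp only: hs_inner_def of_real_sum)
  moreover assume "hs_inner X X = 0"
  ultimately have "(\<Sum>i\<in>UNIV. \<Sum>j\<in>UNIV. (cmod (X i j))\<^sup>2) = 0"
    by (metis of_real_eq_0_iff)
  then have "(cmod (X i j))\<^sup>2 = 0" for i j
    by (simp add: sum_nonneg sum_nonneg_eq_0_iff)
  then show "X = (\<lambda>i j. 0)" by (simp add: fun_eq_iff)
qed (simp add: hs_inner_def)

lemma hs_inner_sum_right:
  "hs_inner X (\<lambda>i j. \<Sum>s\<in>F. Y s i j) = (\<Sum>s\<in>F. hs_inner X (Y s))"
  by (simp add: hs_inner_def sum_distrib_left sum.swap[of _ UNIV F])

lemma hs_inner_scale_right: "hs_inner X (\<lambda>i j. c * Y i j) = c * hs_inner X Y"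
  by (simp add: hs_inner_def sum_distrib_left mult_ac)

lemma hs_inner_lincomb_left:
  "hs_inner (\<lambda>i j. \<Sum>s\<in>F. c s * s i j) X = (\<Sum>s\<in>F. cnj (c s) * hs_inner s X)"
  by (simp add: hs_inner_def sum_distrib_left sum_distrib_right sum.swap[of _ UNIV F] mult_ac)

lemma hs_inner_sigma_el:
  "hs_inner (sigma_el A B) (sigma_el A' B') = hs_inner A A' * hs_inner B B'"
proof -
  have "hs_inner (sigma_el A B) (sigma_el A' B')
      = (\<Sum>a\<in>UNIV. \<Sum>b\<in>UNIV. \<Sum>a'\<in>UNIV. \<Sum>b'\<in>UNIV.
           (cnj (A a b) * A' a b) * (cnj (B b' a') * B' b' a'))"
    by (simp add: hs_inner_def sigma_el_def sum_UNIV_prod mult_ac)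
  also have "\<dots> = (\<Sum>a\<in>UNIV. \<Sum>b\<in>UNIV. cnj (A a b) * A' a b) *
      (\<Sum>a'\<in>UNIV. \<Sum>b'\<in>UNIV. cnj (B b' a') * B' b' a')"
    unfolding sum_distrib_right by (simp only: sum_distrib_left)
  also have "\<dots> = hs_inner A A' * hs_inner B B'"
    unfolding hs_inner_def by (subst (2) sum.swap) (rule refl)
  finally show ?thesis .
qed

lemma orth_proj_inner:
  assumes "is_orth_proj V P" "T \<in> V"
  shows "hs_inner T (P S) = hs_inner T S"
  using assms unfolding is_orth_proj_def by (metis hs_inner_diff_right eq_iff_diff_eq_0)

lemma orth_proj_unique:
  assumes "is_orth_proj V P" "is_orth_proj V Q"
  shows "P = Q"
proof
  fix S
  have "P S \<in> V" "Q S \<in> V"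
    using assms unfolding is_orth_proj_def by auto
  then have "hs_inner (\<lambda>i j. P S i j - Q S i j) (\<lambda>i j. P S i j - Q S i j) = 0"
    using orth_proj_inner[OF assms(1)] orth_proj_inner[OF assms(2)]
    by (simp add: hs_inner_diff_left hs_inner_diff_right)
  then show "P S = Q S"
    by (simp add: hs_inner_self_eq_0_iff fun_eq_iff)
qed

lemma op_span_lincomb_mem:
  assumes "finite I" "g ` I \<subseteq> G"
  shows "(\<lambda>a b. \<Sum>i\<in>I. c i * g i a b) \<in> op_span G"
proof -
  define d where "d s = (\<Sum>i\<in>{i\<in>I. g i = s}. c i)" for s
  have "(\<Sum>i\<in>I. c i * g i a b) = (\<Sum>s\<in>g ` I. d s * s a b)" for a b
    unfolding d_def sum_distrib_right using assms(1)
    by (subst sum.image_gen[of I]) (auto intro!: sum.cong)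
  then show ?thesis
    unfolding op_span_def using assms by (intro CollectI exI[of _ "g ` I"] exI[of _ d]) auto
qed

lemma is_orth_proj_op_spanI:
  assumes "\<And>S. P S \<in> op_span G"
    and "\<And>S g. g \<in> G \<Longrightarrow> hs_inner g (P S) = hs_inner g S"
  shows "is_orth_proj (op_span G) P"
  unfolding is_orth_proj_def
proof (intro allI conjI ballI)
  fix S T
  assume "T \<in> op_span G"
  then obtain F c where "F \<subseteq> G" and T: "T = (\<lambda>i j. \<Sum>s\<in>F. c s * s i j)"
    unfolding op_span_def by blast
  then show "hs_inner T (\<lambda>i j. S i j - P S i j) = 0"
    using assms(2) by (auto simp: hs_inner_lincomb_left hs_inner_diff_right intro!: sum.neutral)
qed (fact assms(1))

definition mat_unit :: "'i \<Rightarrow> 'j \<Rightarrow> ('i,'j) op" where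
  "mat_unit x y = (\<lambda>i j. if i = x \<and> j = y then 1 else 0)"

text \<open>\<open>sigma_map F G = \<sigma> \<circ> (F \<otimes> G) \<circ> \<sigma>\<^sup>-\<^sup>1\<close>, since \<open>\<sigma>\<close> maps \<open>mat_unit x u \<otimes> mat_unit v y\<close>
  to \<open>mat_unit (x,u) (y,v)\<close>.\<close>
definition sigma_map ::
  "(('h::finite,'k::finite) op \<Rightarrow> ('h,'k) op) \<Rightarrow> (('k,'h) op \<Rightarrow> ('k,'h) op)
    \<Rightarrow> ('h \<times> 'k, 'h \<times> 'k) op \<Rightarrow> ('h \<times> 'k, 'h \<times> 'k) op" where
  "sigma_map F G S = (\<lambda>i j. \<Sum>p\<in>UNIV. \<Sum>q\<in>UNIV.
     S p q * sigma_el (F (mat_unit (fst p) (snd p))) (G (mat_unit (snd q) (fst q))) i j)"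

lemma sigma_map_id: "sigma_map id id S = S"
  by (simp add: sigma_map_def sigma_el_def mat_unit_def sum_UNIV_prod fun_eq_iff
      if_distrib[of "\<lambda>t. _ * t"] if_if_eq_conj[symmetric] sum_if_constant_condition cong: if_cong)

lemma hs_inner_sigma_el_sigma_map:
  "hs_inner (sigma_el A B) (sigma_map F G S) = (\<Sum>p\<in>UNIV. \<Sum>q\<in>UNIV. S p q *
     (hs_inner A (F (mat_unit (fst p) (snd p))) * hs_inner B (G (mat_unit (snd q) (fst q)))))"
  by (simp add: sigma_map_def hs_inner_sum_right hs_inner_scale_right hs_inner_sigma_el)

lemma is_orth_proj_sigma_map:
  assumes "is_orth_proj V1 F" "is_orth_proj V2 G"
  shows "is_orth_proj (op_span {sigma_el A B | A B. A \<in> V1 \<and> B \<in> V2}) (sigma_map F G)"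
proof (rule is_orth_proj_op_spanI)
  fix S
  have "sigma_map F G S = (\<lambda>i j. \<Sum>t\<in>UNIV. S (fst t) (snd t) *
      sigma_el (F (mat_unit (fst (fst t)) (snd (fst t))))
        (G (mat_unit (snd (snd t)) (fst (snd t)))) i j)"
    by (simp add: sigma_map_def sum_UNIV_prod)
  also have "\<dots> \<in> op_span {sigma_el A B | A B. A \<in> V1 \<and> B \<in> V2}"
    using assms unfolding is_orth_proj_def
    by (intro op_span_lincomb_mem) (simp_all add: image_subset_iff, blast)
  finally show "sigma_map F G S \<in> op_span {sigma_el A B | A B. A \<in> V1 \<and> B \<in> V2}" .
next
  fix S g
  assume "g \<in> {sigma_el A B | A B. A \<in> V1 \<and> B \<in> V2}"
  then obtain A B where g: "g = sigma_el A B" and "A \<in> V1" "B \<in> V2" by blast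
  then have "hs_inner g (sigma_map F G S) = hs_inner g (sigma_map id id S)"
    by (simp add: hs_inner_sigma_el_sigma_map orth_proj_inner[OF assms(1)]
        orth_proj_inner[OF assms(2)])
  then show "hs_inner g (sigma_map F G S) = hs_inner g S"
    by (simp add: sigma_map_id)
qed

lemma pi1_mat_unit: "pi1 P (mat_unit x y) a c = P (a,c) (x,y)"
  by (simp add: pi1_def mat_unit_def if_distrib[of "\<lambda>t. _ * t"] if_if_eq_conj[symmetric]
      sum_if_constant_condition cong: if_cong)

lemma pi2_mat_unit: "pi2 P (mat_unit x y) c d = P (x,y) (c,d)"
  by (simp add: pi2_def mat_unit_def if_distrib[of "\<lambda>t. _ * t"] if_if_eq_conj[symmetric]
      sum_if_constant_condition cong: if_cong)

lemma pi4_mat_unit: "pi4 T (mat_unit (x,u) (y,v)) (a,b) (d,c) = T (a,y,b,v) (x,d,u,c)"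
  by (simp add: pi4_def mat_unit_def if_distrib[of "\<lambda>t. _ * t"] if_if_eq_conj[symmetric]
      sum_if_constant_condition cong: if_cong)

lemma pi4_inject:
  fixes T T' :: "('a::finite \<times> 'a \<times> 'b::finite \<times> 'b, 'a \<times> 'a \<times> 'b \<times> 'b) op"
  assumes "pi4 T = pi4 T'"
  shows "T = T'"
proof (intro ext)
  fix i j :: "'a \<times> 'a \<times> 'b \<times> 'b"
  obtain a y b v x d u c where "i = (a,y,b,v)" "j = (x,d,u,c)"
    by (cases i, cases j) auto
  then show "T i j = T' i j"
    using pi4_mat_unit[of T x u y v a b d c] pi4_mat_unit[of T' x u y v a b d c] assms by simp
qed

lemma pi4_sigma'_kron:
  fixes P1 :: "('h::finite \<times> 'k::finite, 'h \<times> 'k) op" and P2 :: "('k \<times> 'h, 'k \<times> 'h) op"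
  shows "pi4 (sigma' (kron P1 P2)) = sigma_map (pi1 P1) (pi2 P2)"
proof (intro ext)
  fix S and p q :: "'h \<times> 'k"
  obtain a b d c where pq: "p = (a,b)" "q = (d,c)" by (cases p, cases q) auto
  have "pi4 (sigma' (kron P1 P2)) S p q = (\<Sum>x\<in>UNIV. \<Sum>y\<in>UNIV. \<Sum>u\<in>UNIV. \<Sum>v\<in>UNIV.
      P1 (a,b) (x,u) * P2 (v,y) (c,d) * S (x,u) (y,v))"
    by (simp add: pq pi4_def sigma'_def kron_def)
  also have "\<dots> = (\<Sum>x\<in>UNIV. \<Sum>u\<in>UNIV. \<Sum>y\<in>UNIV. \<Sum>v\<in>UNIV.
      P1 (a,b) (x,u) * P2 (v,y) (c,d) * S (x,u) (y,v))"
    by (rule sum.cong[OF refl], rule sum.swap)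
  also have "\<dots> = sigma_map (pi1 P1) (pi2 P2) S p q"
    by (simp add: pq sigma_map_def sigma_el_def pi1_mat_unit pi2_mat_unit sum_UNIV_prod mult_ac)
  finally show "pi4 (sigma' (kron P1 P2)) S p q = sigma_map (pi1 P1) (pi2 P2) S p q" .
qed

lemma ptrace1_mmul_kron_idop:
  "ptrace1 (mmul X (kron m idop)) k k' = (\<Sum>a\<in>UNIV. \<Sum>a'\<in>UNIV. X (a,k) (a',k') * m a' a)"
  by (simp add: ptrace1_def mmul_def kron_def idop_def sum_UNIV_prod if_distrib[of "\<lambda>t. _ * t"]
      cong: if_cong)

lemma ptrace1_kron_idop_mmul:
  "ptrace1 (mmul (kron n idop) X) k k' = (\<Sum>a\<in>UNIV. \<Sum>a'\<in>UNIV. n a a' * X (a',k) (a,k'))"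
  by (simp add: ptrace1_def mmul_def kron_def idop_def sum_UNIV_prod if_distrib[of "\<lambda>t. _ * t"]
      if_distrib[of "\<lambda>t. t * _"] cong: if_cong)

lemma S_V_sigma'_kron:
  "S_V (sigma' (kron P1 P2)) (a1,a2) (b1,b2)
    = (\<Sum>c\<in>UNIV. \<Sum>z\<in>UNIV. P1 (a1,c) (b1,z) * P2 (z,a2) (c,b2))"
  by (simp add: S_V_def id_id_trK_def id_id_mN_def sigma'_def kron_def)

lemma A_S_S_V_sigma'_kron: "A_S (S_V (sigma' (kron P1 P2))) m = A_P2 P2 (A_P1 P1 m)"
proof (intro ext)
  fix k k'
  have "A_S (S_V (sigma' (kron P1 P2))) m k k' = (\<Sum>a\<in>UNIV. \<Sum>a'\<in>UNIV. \<Sum>c\<in>UNIV. \<Sum>z\<in>UNIV.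
      P1 (a,c) (a',z) * P2 (z,k) (c,k') * m a' a)"
    by (simp add: A_S_def ptrace1_mmul_kron_idop S_V_sigma'_kron sum_distrib_right)
  also have "\<dots> = (\<Sum>c\<in>UNIV. \<Sum>z\<in>UNIV. \<Sum>a\<in>UNIV. \<Sum>a'\<in>UNIV.
      P1 (a,c) (a',z) * P2 (z,k) (c,k') * m a' a)"
    by (rule sum_swap_nested)
  also have "\<dots> = A_P2 P2 (A_P1 P1 m) k k'"
    by (simp add: A_P2_def A_P1_def ptrace1_mmul_kron_idop ptrace1_kron_idop_mmul
        sum_distrib_left sum_distrib_right mult_ac)
  finally show "A_S (S_V (sigma' (kron P1 P2))) m k k' = A_P2 P2 (A_P1 P1 m) k k'" .
qed

theorem proposition5p4:
  fixes M :: "('h::finite, 'h) op set"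
    and V :: "('h \<times> 'k::finite, 'h \<times> 'k) op set"
    and V1 :: "('h, 'k) op set" and V2 :: "('k, 'h) op set"
    and P1 :: "('h \<times> 'k, 'h \<times> 'k) op"
    and P2 :: "('k \<times> 'h, 'k \<times> 'h) op"
    and PV :: "('h \<times> 'h \<times> 'k \<times> 'k, 'h \<times> 'h \<times> 'k \<times> 'k) op"
  assumes "is_fd_vN_algebra M"
    and "quantum_multi_relation M UNIV V"
    and "decomposable_with V V1 V2"
    and "P1 \<in> alg_tensor M UNIV" and "is_orth_proj V1 (pi1 P1)"
    and "P2 \<in> alg_tensor UNIV M" and "is_orth_proj V2 (pi2 P2)"
    and "PV \<in> alg_tensor M (alg_tensor M (alg_tensor UNIV UNIV))" and "is_orth_proj V (pi4 PV)"
  shows "sigma' (kron P1 P2) = PV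
    \<and> (minimally_represented M \<longrightarrow> (\<forall>m\<in>M. A_S (S_V PV) m = A_P2 P2 (A_P1 P1 m)))"
proof -
  have "V = op_span {sigma_el A B | A B. A \<in> V1 \<and> B \<in> V2}"
    using assms(3) unfolding decomposable_with_def by blast
  then have "is_orth_proj V (pi4 (sigma' (kron P1 P2)))"
    using is_orth_proj_sigma_map[OF assms(5,7)] unfolding pi4_sigma'_kron by simp
  then have "pi4 (sigma' (kron P1 P2)) = pi4 PV"
    using assms(9) by (rule orth_proj_unique)
  then have "sigma' (kron P1 P2) = PV"
    by (rule pi4_inject)
  then show ?thesis
    using A_S_S_V_sigma'_kron[of P1 P2] by simp
qed

end
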